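(* Let $(X,\mathrm{dist})$ be a metric space, $P\subset X$ finite, $\varepsilon\ge0$, and suppose $G$ is a bipartite Steiner $(1+\varepsilon)$-spanner for $P$ with $|E|$ edges. Then there is a $(2+2\varepsilon)$-spanner for $P$ (a geometric graph with vertex set exactly $P$) with at most $|E|$ edges.
   Context: A geometric graph on a finite subset $V$ of $X$ has each edge $uv$ weighted by $\mathrm{dist}(u,v)$; $\mathrm{dist}_G$ denotes shortest-path length. A Steiner $t$-spanner for $P$ is a geometric graph $G$ on $P\cup S$ for a finite $S\subset X\setminus P$ with $\mathrm{dist}_G(u,v)\le t\,\mathrm{dist}(u,v)$ for all $u,v\in P$; it is bipartite if every edge joins a point of $P$ to a point of $S$. A $t$-spanner is a Steiner $t$-spanner with $S=\emptyset$. *)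

theory Defs
  imports "HOL-Analysis.Analysis" "HOL-Library.Extended_Real"
begin

definition geometric_graph :: "'a::metric_space set \<Rightarrow> 'a set set \<Rightarrow> bool" where
  "geometric_graph V E \<longleftrightarrow> finite V \<and>
     (\<forall>e\<in>E. \<exists>u v. e = {u, v} \<and> u \<noteq> v \<and> u \<in> V \<and> v \<in> V)"

definition is_walk :: "'a set \<Rightarrow> 'a set set \<Rightarrow> 'a list \<Rightarrow> bool" where
  "is_walk V E xs \<longleftrightarrow> xs \<noteq> [] \<and> set xs \<subseteq> V \<and>
     (\<forall>i. Suc i < length xs \<longrightarrow> {xs ! i, xs ! Suc i} \<in> E)"

definition walk_length :: "'a::metric_space list \<Rightarrow> real" where
  "walk_length xs = (\<Sum>i<length xs - 1. dist (xs ! i) (xs ! Suc i))"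

text \<open>Shortest-path distance in the geometric graph (infinite if no path exists).\<close>
definition graph_dist :: "'a::metric_space set \<Rightarrow> 'a set set \<Rightarrow> 'a \<Rightarrow> 'a \<Rightarrow> ereal" where
  "graph_dist V E u v =
     Inf {ereal (walk_length xs) | xs. is_walk V E xs \<and> hd xs = u \<and> last xs = v}"

definition steiner_spanner ::
  "real \<Rightarrow> 'a::metric_space set \<Rightarrow> 'a set \<Rightarrow> 'a set set \<Rightarrow> bool" where
  "steiner_spanner t P S E \<longleftrightarrow> finite S \<and> S \<inter> P = {} \<and>
     geometric_graph (P \<union> S) E \<and>
     (\<forall>u\<in>P. \<forall>v\<in>P. graph_dist (P \<union> S) E u v \<le> ereal t * ereal (dist u v))"

definition bipartite_steiner_spanner ::
  "real \<Rightarrow> 'a::metric_space set \<Rightarrow> 'a set \<Rightarrow> 'a set set \<Rightarrow> bool" where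
  "bipartite_steiner_spanner t P S E \<longleftrightarrow> steiner_spanner t P S E \<and>
     (\<forall>e\<in>E. \<exists>p s. e = {p, s} \<and> p \<in> P \<and> s \<in> S)"

definition spanner :: "real \<Rightarrow> 'a::metric_space set \<Rightarrow> 'a set set \<Rightarrow> bool" where
  "spanner t P E \<longleftrightarrow> steiner_spanner t P {} E"

end

theory Submission
  imports Defs
begin

text \<open>Map every Steiner point to its nearest neighbour in \<open>P\<close> and every point of \<open>P\<close> to
  itself. For an edge \<open>{p, s}\<close> with \<open>p \<in> P\<close> the images are \<open>p\<close> and some \<open>q\<close> with
  \<open>dist s q \<le> dist s p\<close>, so the image edge has length at most \<open>2 * dist p s\<close> by the triangle
  inequality. Hence every walk in the Steiner spanner maps to a walk on \<open>P\<close> of at most twice the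
  length, and the image edge set is no larger than the original one.\<close>

lemma walk_length_single [simp]: "walk_length [x] = 0"
  by (simp add: walk_length_def)

lemma walk_length_Cons_Cons [simp]:
  "walk_length (x # y # xs) = dist x y + walk_length (y # xs)"
  unfolding walk_length_def by (simp add: sum.lessThan_Suc_shift del: sum.lessThan_Suc)

lemma is_walk_single [simp]: "is_walk V E [x] \<longleftrightarrow> x \<in> V"
  by (simp add: is_walk_def)

lemma is_walk_Cons_Cons [simp]:
  "is_walk V E (x # y # xs) \<longleftrightarrow> x \<in> V \<and> {x, y} \<in> E \<and> is_walk V E (y # xs)"
proof -
  have "(\<forall>i. Suc i < length (z # zs) \<longrightarrow> Q i) \<longleftrightarrow> (\<forall>i<length zs. Q i)" for z :: 'a and zs Q
    by simp
  then show ?thesis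
    unfolding is_walk_def by (auto simp: All_less_Suc2)
qed

lemma geometric_graph_finite_edges:
  assumes "geometric_graph V E"
  shows "finite E"
proof -
  have "E \<subseteq> Pow V"
    using assms by (auto simp: geometric_graph_def)
  then show ?thesis
    using assms finite_subset by (auto simp: geometric_graph_def)
qed

lemma walk_image:
  assumes walk: "is_walk V E xs" and hd_in: "g (hd xs) \<in> V'" and "0 \<le> c"
    and edge: "\<And>a b. {a, b} \<in> E \<Longrightarrow>
      g a \<in> V' \<and> g b \<in> V' \<and> (g a \<noteq> g b \<longrightarrow> {g a, g b} \<in> E') \<and> dist (g a) (g b) \<le> c * dist a b"
  shows "is_walk V' E' (remdups_adj (map g xs))"
    and "walk_length (remdups_adj (map g xs)) \<le> c * walk_length xs"
proof -
  obtain x xs' where xs: "xs = x # xs'"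
    using walk by (cases xs) (auto simp: is_walk_def)
  have "is_walk V' E' (remdups_adj (map g (x # xs'))) \<and>
        walk_length (remdups_adj (map g (x # xs'))) \<le> c * walk_length (x # xs')"
    using walk hd_in unfolding xs
  proof (induction xs' arbitrary: x)
    case Nil
    then show ?case by simp
  next
    case (Cons y xs')
    have xy: "{x, y} \<in> E" and walk_y: "is_walk V E (y # xs')"
      using Cons.prems by auto
    note edge_xy = edge[OF xy]
    then have IH: "is_walk V' E' (remdups_adj (map g (y # xs')))"
      "walk_length (remdups_adj (map g (y # xs'))) \<le> c * walk_length (y # xs')"
      using Cons.IH[OF walk_y] by auto
    show ?case
    proof (cases "g x = g y")
      case True
      have "0 \<le> c * dist x y"
        using \<open>0 \<le> c\<close> by simp
      then show ?thesis
        using IH True by (simp add: distrib_left)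
    next
      case False
      obtain R where R: "remdups_adj (map g (y # xs')) = g y # R"
        by (metis list.simps(9) remdups_adj_Cons_alt)
      have "remdups_adj (map g (x # y # xs')) = g x # g y # R"
        using False R by simp
      then show ?thesis
        using IH R False edge_xy by (simp add: distrib_left add_mono)
    qed
  qed
  then show "is_walk V' E' (remdups_adj (map g xs))"
    and "walk_length (remdups_adj (map g xs)) \<le> c * walk_length xs"
    using xs by auto
qed

lemma graph_dist_image_le:
  assumes "g u \<in> V'" and "0 < c"
    and edge: "\<And>a b. {a, b} \<in> E \<Longrightarrow>
      g a \<in> V' \<and> g b \<in> V' \<and> (g a \<noteq> g b \<longrightarrow> {g a, g b} \<in> E') \<and> dist (g a) (g b) \<le> c * dist a b"
  shows "graph_dist V' E' (g u) (g v) \<le> ereal c * graph_dist V E u v"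
proof -
  have "graph_dist V' E' (g u) (g v) \<le> ereal (c * walk_length xs)"
    if "is_walk V E xs" "hd xs = u" "last xs = v" for xs
  proof -
    let ?ys = "remdups_adj (map g xs)"
    have nonempty: "xs \<noteq> []"
      using that(1) by (simp add: is_walk_def)
    have "is_walk V' E' ?ys" "walk_length ?ys \<le> c * walk_length xs"
      using walk_image[OF that(1) _ _ edge] that(2) assms(1,2) by auto
    moreover have "hd ?ys = g u" "last ?ys = g v"
      using that(2,3) nonempty by (simp_all add: hd_map last_map)
    ultimately have "graph_dist V' E' (g u) (g v) \<le> ereal (walk_length ?ys)"
      unfolding graph_dist_def by (intro Inf_lower) blast
    also have "\<dots> \<le> ereal (c * walk_length xs)"
      using \<open>walk_length ?ys \<le> c * walk_length xs\<close> by simp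
    finally show ?thesis .
  qed
  then have "graph_dist V' E' (g u) (g v) \<le>
      Inf {ereal c * y | y. \<exists>xs. y = ereal (walk_length xs) \<and> is_walk V E xs \<and> hd xs = u \<and> last xs = v}"
    by (intro Inf_greatest) auto
  also have "\<dots> = ereal c * graph_dist V E u v"
    unfolding graph_dist_def ereal_Inf_cmult[OF \<open>0 < c\<close>] by (simp add: setcompr_eq_image)
  finally show ?thesis .
qed

definition edge_image :: "('a \<Rightarrow> 'a) \<Rightarrow> 'a set set \<Rightarrow> 'a set set" where
  "edge_image g E = {{g a, g b} | a b. {a, b} \<in> E \<and> g a \<noteq> g b}"

lemma card_edge_image_le:
  assumes "finite E"
  shows "card (edge_image g E) \<le> card E"
proof -
  have "{g a, g b} \<in> (`) g ` E" if "{a, b} \<in> E" for a b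
    using that by (metis image_empty image_eqI image_insert)
  then have "edge_image g E \<subseteq> (`) g ` E"
    unfolding edge_image_def by blast
  then have "card (edge_image g E) \<le> card ((`) g ` E)"
    using assms by (intro card_mono) auto
  also have "\<dots> \<le> card E"
    using assms by (rule card_image_le)
  finally show ?thesis .
qed

lemma geometric_graph_edge_image:
  assumes "finite V'" and "\<And>a b. {a, b} \<in> E \<Longrightarrow> g a \<in> V' \<and> g b \<in> V'"
  shows "geometric_graph V' (edge_image g E)"
  using assms unfolding geometric_graph_def edge_image_def by blast

definition nearest_neighbour :: "'a::metric_space set \<Rightarrow> 'a set set \<Rightarrow> 'a \<Rightarrow> 'a" where
  "nearest_neighbour P E x =
     (if x \<in> P then x else arg_min_on (dist x) {p \<in> P. {p, x} \<in> E})"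

lemma nearest_neighbour_edge:
  assumes "finite P" and "s \<notin> P" and "p \<in> P" and "{p, s} \<in> E"
  shows "nearest_neighbour P E s \<in> P"
    and "dist p (nearest_neighbour P E s) \<le> 2 * dist p s"
proof -
  let ?N = "{p \<in> P. {p, s} \<in> E}"
  have N: "finite ?N" "?N \<noteq> {}" "p \<in> ?N"
    using assms by auto
  have q: "arg_min_on (dist s) ?N \<in> ?N" "dist s (arg_min_on (dist s) ?N) \<le> dist s p"
    using arg_min_if_finite(1)[OF N(1,2)] arg_min_least[OF N] by auto
  then show "nearest_neighbour P E s \<in> P"
    using assms(2) by (simp add: nearest_neighbour_def)
  have "dist p (arg_min_on (dist s) ?N) \<le> dist p s + dist s (arg_min_on (dist s) ?N)"
    by (rule dist_triangle)
  also have "\<dots> \<le> 2 * dist p s"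
    using q(2) by (simp add: dist_commute)
  finally show "dist p (nearest_neighbour P E s) \<le> 2 * dist p s"
    using assms(2) by (simp add: nearest_neighbour_def)
qed

lemma nearest_neighbour_bipartite_edge:
  assumes "finite P" and "S \<inter> P = {}" and bip: "\<forall>e\<in>E. \<exists>p s. e = {p, s} \<and> p \<in> P \<and> s \<in> S"
    and ab: "{a, b} \<in> E"
  shows "nearest_neighbour P E a \<in> P \<and> nearest_neighbour P E b \<in> P \<and>
    dist (nearest_neighbour P E a) (nearest_neighbour P E b) \<le> 2 * dist a b"
proof -
  obtain p s where ps: "{a, b} = {p, s}" "p \<in> P" "s \<in> S"
    using bip ab by blast
  have "s \<notin> P" "{p, s} \<in> E"
    using ps ab assms(2) by auto
  note near = nearest_neighbour_edge[OF assms(1) this(1) ps(2) this(2)]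
  have "nearest_neighbour P E p = p"
    using ps(2) by (simp add: nearest_neighbour_def)
  then show ?thesis
    using ps(1,2) near by (auto simp: doubleton_eq_iff dist_commute)
qed

lemma spanner_edge_image:
  assumes spanner: "steiner_spanner t P S E" and "0 < c" and fixes_P: "\<And>p. p \<in> P \<Longrightarrow> g p = p"
    and edge: "\<And>a b. {a, b} \<in> E \<Longrightarrow> g a \<in> P \<and> g b \<in> P \<and> dist (g a) (g b) \<le> c * dist a b"
  shows "spanner (c * t) P (edge_image g E)"
proof -
  have stretch: "graph_dist (P \<union> S) E u v \<le> ereal t * ereal (dist u v)" if "u \<in> P" "v \<in> P" for u v
    using spanner that by (simp add: steiner_spanner_def)
  have "finite P"
    using spanner by (simp add: steiner_spanner_def geometric_graph_def)
  have edge': "g a \<in> P \<and> g b \<in> P \<and> (g a \<noteq> g b \<longrightarrow> {g a, g b} \<in> edge_image g E) \<and>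
      dist (g a) (g b) \<le> c * dist a b" if "{a, b} \<in> E" for a b
    using edge[OF that] that unfolding edge_image_def by blast
  have "graph_dist P (edge_image g E) u v \<le> ereal (c * t) * ereal (dist u v)"
    if "u \<in> P" "v \<in> P" for u v
  proof -
    have "graph_dist P (edge_image g E) u v = graph_dist P (edge_image g E) (g u) (g v)"
      using that fixes_P by simp
    also have "\<dots> \<le> ereal c * graph_dist (P \<union> S) E u v"
      using that fixes_P edge' \<open>0 < c\<close> by (intro graph_dist_image_le) auto
    also have "\<dots> \<le> ereal c * (ereal t * ereal (dist u v))"
      using stretch[OF that] \<open>0 < c\<close> by (intro ereal_mult_left_mono) auto
    finally show ?thesis
      by (simp add: mult.assoc)
  qed
  moreover have "geometric_graph P (edge_image g E)"
    using \<open>finite P\<close> edge by (intro geometric_graph_edge_image) auto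
  ultimately show ?thesis
    unfolding spanner_def steiner_spanner_def by simp
qed

theorem mainTheorem7:
  fixes P S :: "'a::metric_space set" and E :: "'a set set" and \<epsilon> :: real
  assumes "finite P" and "\<epsilon> \<ge> 0"
    and "bipartite_steiner_spanner (1 + \<epsilon>) P S E"
  shows "\<exists>E'. spanner (2 + 2 * \<epsilon>) P E' \<and> card E' \<le> card E"
proof -
  have spanner: "steiner_spanner (1 + \<epsilon>) P S E"
    and bip: "\<forall>e\<in>E. \<exists>p s. e = {p, s} \<and> p \<in> P \<and> s \<in> S"
    using assms(3) by (auto simp: bipartite_steiner_spanner_def)
  then have "S \<inter> P = {}" and "geometric_graph (P \<union> S) E"
    by (auto simp: steiner_spanner_def)
  let ?E' = "edge_image (nearest_neighbour P E) E"
  have "spanner (2 * (1 + \<epsilon>)) P ?E'"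
    using spanner nearest_neighbour_bipartite_edge[OF assms(1) \<open>S \<inter> P = {}\<close> bip]
    by (intro spanner_edge_image) (auto simp: nearest_neighbour_def)
  moreover have "card ?E' \<le> card E"
    using \<open>geometric_graph (P \<union> S) E\<close> by (intro card_edge_image_le geometric_graph_finite_edges)
  ultimately show ?thesis
    by (metis distrib_left mult.right_neutral)
qed

end
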